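(* Let $\mathbf{D},\mathbf{E},\mathbf{X}$ be Banach spaces such that $\mathbf{D}\subset\mathbf{X}$, $\mathbf{E}$ is an interpolation space between $\mathbf{D}$ and $\mathbf{X}$, and $\mathbf{D}$ is dense in $\mathbf{E}$. Let $(T_n)_{n\ge1}$ be bounded linear operators on $\mathbf{X}$ such that $\lim_n\|T_nx\|_{\mathbf{X}}=0$ for every $x\in\mathbf{X}$ and $\lim_n\|T_nx\|_{\mathbf{D}}=0$ for every $x\in\mathbf{D}$. Then $\lim_n\|T_nx\|_{\mathbf{E}}=0$ for every $x\in\mathbf{E}$.
   Context: $\mathbf{D}\subset\mathbf{X}$ means $\mathbf{D}$ is continuously embedded in $\mathbf{X}$: its elements form a subset of $\mathbf{X}$ and $\|x\|_{\mathbf{X}}\le N\|x\|_{\mathbf{D}}$ for some constant $N$. A Banach space $\mathbf{E}$ is an interpolation space between $\mathbf{D}$ and $\mathbf{X}$ if $\mathbf{D}\subset\mathbf{E}\subset\mathbf{X}$ and every bounded linear operator on $\mathbf{X}$ whose restriction to $\mathbf{D}$ is a bounded operator on $\mathbf{D}$ also restricts to a bounded operator on $\mathbf{E}$. *)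

theory Defs
  imports "HOL-Analysis.Analysis"
begin

text \<open>Continuous embeddings are modelled by injective bounded linear maps into the
ambient space X. D \<subset> E continuously: iD = iE \<circ> jDE with jDE bounded linear.\<close>

definition cont_embedding :: "('a::real_normed_vector \<Rightarrow> 'b::real_normed_vector) \<Rightarrow> bool" where
  "cont_embedding i \<longleftrightarrow> bounded_linear i \<and> inj i"

definition restricts_bounded :: "('a::real_normed_vector \<Rightarrow> 'x::real_normed_vector) \<Rightarrow> ('x \<Rightarrow> 'x) \<Rightarrow> bool" where
  "restricts_bounded i T \<longleftrightarrow> (\<exists>S. bounded_linear S \<and> (\<forall>a. i (S a) = T (i a)))"

definition interpolation_space ::
  "('d::real_normed_vector \<Rightarrow> 'x::real_normed_vector) \<Rightarrow> ('e::real_normed_vector \<Rightarrow> 'x) \<Rightarrow> bool" where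
  "interpolation_space iD iE \<longleftrightarrow>
     cont_embedding iD \<and> cont_embedding iE \<and>
     (\<exists>j. bounded_linear j \<and> (\<forall>d. iE (j d) = iD d)) \<and>
     (\<forall>T. bounded_linear T \<and> restricts_bounded iD T \<longrightarrow> restricts_bounded iE T)"

end

(*
  The interpolation property is qualitative; the closed graph theorem makes it quantitative.
  Pairs (T, S) of an operator T on X and its restriction S to D form a closed subspace of a
  Banach space, and (T, S) \<mapsto> T|E is linear with closed graph, so
  \<parallel>T|E\<parallel> \<le> C (\<parallel>T\<parallel>_X + \<parallel>T|D\<parallel>_D).  By uniform boundedness the T_n are uniformly bounded on X
  and on D, hence their restrictions to E are uniformly bounded; as they tend to 0 pointwise
  on the dense subspace D, they tend to 0 on all of E.
*)
theory Submission
  imports Defs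
begin

lemma Baire_closed_cover_ball:
  fixes V :: "'a::banach set" and C :: "nat \<Rightarrow> 'a set"
  assumes "closed V" "V \<noteq> {}" and C: "\<And>k. closed (C k)" "\<And>k. C k \<subseteq> V"
    and cover: "V \<subseteq> (\<Union>k. C k)"
  obtains k v r where "r > 0" "v \<in> V" "ball v r \<inter> V \<subseteq> C k"
proof -
  have "\<exists>k. top_of_set V interior_of C k \<noteq> {}"
  proof (rule ccontr)
    assume "\<nexists>k. top_of_set V interior_of C k \<noteq> {}"
    then have "top_of_set V interior_of \<Union>(range C) = {}"
      using C \<open>closed V\<close>
      by (intro Baire_category_alt)
        (auto simp: completely_metrizable_space_closedin completely_metrizable_space_euclidean
          closed_subset)
    moreover have "\<Union>(range C) = V" using C cover by blast
    ultimately show False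
      using \<open>V \<noteq> {}\<close> by (metis interior_of_topspace topspace_euclidean_subtopology)
  qed
  then obtain k x where "x \<in> top_of_set V interior_of C k" by blast
  then obtain U where U: "openin (top_of_set V) U" "x \<in> U" "U \<subseteq> C k"
    by (meson interior_of_subset openin_interior_of)
  then obtain S where S: "open S" "U = V \<inter> S" by (meson openin_open)
  then obtain r where "r > 0" "ball x r \<subseteq> S" using U open_contains_ball by blast
  then show thesis using S U by (intro that[of r x k]) auto
qed

locale closed_subspace_linear_map =
  fixes V :: "'a::banach set" and \<Phi> :: "'a \<Rightarrow> 'b::banach"
  assumes subspace: "subspace V" and closed: "closed V"
    and add: "a \<in> V \<Longrightarrow> b \<in> V \<Longrightarrow> \<Phi> (a + b) = \<Phi> a + \<Phi> b"
    and scale: "a \<in> V \<Longrightarrow> \<Phi> (c *\<^sub>R a) = c *\<^sub>R \<Phi> a"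
begin

lemma zero: "\<Phi> 0 = 0"
  using scale[of 0 0] subspace_0[OF subspace] by simp

lemma diff: "a \<in> V \<Longrightarrow> b \<in> V \<Longrightarrow> \<Phi> (a - b) = \<Phi> a - \<Phi> b"
  using add[of a "(-1) *\<^sub>R b"] scale[of b "-1"] subspace_scale[OF subspace, of b "-1"] by simp

lemma sum:
  fixes s :: "nat \<Rightarrow> 'a"
  assumes "\<And>j. s j \<in> V"
  shows "\<Phi> (\<Sum>j<n. s j) = (\<Sum>j<n. \<Phi> (s j))"
  using assms by (induction n) (auto simp: zero add subspace_sum[OF subspace])

lemma approximant_in_ball:
  assumes v: "v \<in> V" and ball: "ball v r \<inter> V \<subseteq> closure {w \<in> V. norm (\<Phi> w) \<le> k}"
    and u: "u \<in> V" "norm u < r" and \<epsilon>: "\<epsilon> > 0"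
  shows "\<exists>s\<in>V. norm (\<Phi> s) \<le> k \<and> norm (s - u) < \<epsilon>"
proof -
  have "v + u \<in> closure {w \<in> V. norm (\<Phi> w) \<le> k}"
    using ball u v subspace_add[OF subspace] by (auto simp: dist_norm)
  then obtain a where a: "a \<in> V" "norm (\<Phi> a) \<le> k" "norm (a - (v + u)) < \<epsilon>"
    using \<epsilon> unfolding closure_approachable dist_norm by blast
  have "v - u \<in> closure {w \<in> V. norm (\<Phi> w) \<le> k}"
    using ball u v subspace_diff[OF subspace] by (auto simp: dist_norm)
  then obtain b where b: "b \<in> V" "norm (\<Phi> b) \<le> k" "norm (b - (v - u)) < \<epsilon>"
    using \<epsilon> unfolding closure_approachable dist_norm by blast
  \<comment> \<open>the midpoint of \<open>a\<close> and \<open>-b\<close> approximates \<open>u\<close>, and the centre \<open>v\<close> cancels\<close>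
  define s where "s = (1/2) *\<^sub>R (a - b)"
  have "s \<in> V" unfolding s_def using a b by (simp add: subspace_diff[OF subspace] subspace_scale[OF subspace])
  moreover have "norm (\<Phi> s) \<le> k"
  proof -
    have "norm (\<Phi> s) = (1/2) * norm (\<Phi> a - \<Phi> b)" unfolding s_def using a b
      by (simp add: scale diff subspace_diff[OF subspace])
    also have "\<dots> \<le> (1/2) * (norm (\<Phi> a) + norm (\<Phi> b))" by (simp add: norm_triangle_ineq4)
    finally show ?thesis using a b by simp
  qed
  moreover have "norm (s - u) < \<epsilon>"
  proof -
    have "s - u = (1/2) *\<^sub>R ((a - (v + u)) - (b - (v - u)))"
      unfolding s_def by (simp add: algebra_simps flip: scaleR_add_left)
    then have "norm (s - u) = (1/2) * norm ((a - (v + u)) - (b - (v - u)))"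
      by simp
    also have "\<dots> \<le> (1/2) * (norm (a - (v + u)) + norm (b - (v - u)))"
      by (intro mult_left_mono norm_triangle_ineq4) simp
    finally have "norm (s - u) \<le> (1/2) * (norm (a - (v + u)) + norm (b - (v - u)))" .
    then show ?thesis using a b by simp
  qed
  ultimately show ?thesis by blast
qed

lemma exists_bounded_approximants:
  "\<exists>M\<ge>0. \<forall>u\<in>V. \<forall>\<epsilon>>0. \<exists>s\<in>V. norm (\<Phi> s) \<le> M * norm u \<and> norm (s - u) < \<epsilon>"
proof -
  define C where "C k = closure {w \<in> V. norm (\<Phi> w) \<le> real k}" for k
  have cover: "V \<subseteq> (\<Union>k. C k)"
  proof
    fix w assume "w \<in> V"
    moreover obtain k :: nat where "norm (\<Phi> w) \<le> real k" using real_arch_simple by blast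
    ultimately have "w \<in> C k"
      unfolding C_def using closure_subset[of "{w \<in> V. norm (\<Phi> w) \<le> real k}"] by blast
    then show "w \<in> (\<Union>k. C k)" by blast
  qed
  have C_sub: "C k \<subseteq> V" for k
    unfolding C_def by (rule closure_minimal) (auto simp: closed)
  have C_closed: "closed (C k)" for k
    by (simp add: C_def)
  have "V \<noteq> {}" using subspace_0[OF subspace] by blast
  then obtain k v r where r: "r > 0" "v \<in> V" "ball v r \<inter> V \<subseteq> C k"
    using Baire_closed_cover_ball[OF closed _ C_closed C_sub cover] by blast
  show ?thesis
  proof (intro exI[of _ "2 * real k / r"] conjI ballI allI impI)
    show "2 * real k / r \<ge> 0" using r by simp
    fix u and \<epsilon> :: real assume u: "u \<in> V" and \<epsilon>: "\<epsilon> > 0"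
    show "\<exists>s\<in>V. norm (\<Phi> s) \<le> 2 * real k / r * norm u \<and> norm (s - u) < \<epsilon>"
    proof (cases "u = 0")
      case True
      then show ?thesis using \<epsilon> zero subspace_0[OF subspace] by force
    next
      case False
      define l where "l = r / (2 * norm u)"
      have l: "l > 0" "norm (l *\<^sub>R u) < r"
        using False r by (simp_all add: l_def)
      have "l *\<^sub>R u \<in> V" using u subspace_scale[OF subspace] by blast
      then obtain s where s: "s \<in> V" "norm (\<Phi> s) \<le> real k" "norm (s - l *\<^sub>R u) < l * \<epsilon>"
        using approximant_in_ball[OF r(2) r(3)[unfolded C_def] _ l(2), of "l * \<epsilon>"] \<epsilon> l(1) by auto
      have "s /\<^sub>R l - u = (s - l *\<^sub>R u) /\<^sub>R l"
        using l(1) by (simp add: scaleR_diff_right)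
      then have "norm (s /\<^sub>R l - u) = norm (s - l *\<^sub>R u) / l"
        using l(1) by (simp add: divide_inverse_commute)
      also have "\<dots> < \<epsilon>" using s(3) l(1) by (simp add: divide_less_eq mult.commute)
      finally have "norm (s /\<^sub>R l - u) < \<epsilon>" .
      moreover have "norm (\<Phi> (s /\<^sub>R l)) \<le> 2 * real k / r * norm u"
        using s(1,2) l(1) False r(1) by (simp add: scale l_def field_simps)
      moreover have "s /\<^sub>R l \<in> V" using s(1) subspace_scale[OF subspace] by blast
      ultimately show ?thesis by blast
    qed
  qed
qed

lemma norm_le_if_bounded_approximants:
  assumes M: "M \<ge> 0"
    and approx: "\<And>u \<epsilon>. u \<in> V \<Longrightarrow> \<epsilon> > 0 \<Longrightarrow>
      \<exists>s\<in>V. norm (\<Phi> s) \<le> M * norm u \<and> norm (s - u) < \<epsilon>"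
    and graph: "\<And>v x w. (\<And>k. v k \<in> V) \<Longrightarrow> v \<longlonglongrightarrow> x \<Longrightarrow> (\<lambda>k. \<Phi> (v k)) \<longlonglongrightarrow> w \<Longrightarrow>
      \<Phi> x = w"
    and v: "v \<in> V"
  shows "norm (\<Phi> v) \<le> 2 * M * norm v"
proof (cases "v = 0")
  case True
  then show ?thesis by (simp add: zero)
next
  case False
  obtain f where f: "\<And>u \<epsilon>. u \<in> V \<Longrightarrow> \<epsilon> > 0 \<Longrightarrow>
      f u \<epsilon> \<in> V \<and> norm (\<Phi> (f u \<epsilon>)) \<le> M * norm u \<and> norm (f u \<epsilon> - u) < \<epsilon>"
    using approx by metis
  \<comment> \<open>successive approximation: \<open>s j\<close> approximates the residual \<open>u j\<close> up to \<open>\<parallel>v\<parallel>/2^(j+1)\<close>\<close>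
  define u where "u = rec_nat v (\<lambda>j w. w - f w (norm v / 2 ^ Suc j))"
  define s where "s j = f (u j) (norm v / 2 ^ Suc j)" for j
  have u_0: "u 0 = v" and u_Suc: "u (Suc j) = u j - s j" for j
    by (simp_all add: u_def s_def)
  have uV: "u j \<in> V" and sV: "s j \<in> V" for j
  proof -
    show "u j \<in> V"
      by (induction j) (use v f False subspace_diff[OF subspace] in \<open>simp_all add: u_0 u_Suc s_def\<close>)
    then show "s j \<in> V" using f False by (simp add: s_def)
  qed
  have u_bound: "norm (u j) \<le> norm v * (1/2) ^ j" for j
  proof (cases j)
    case (Suc i)
    have "norm (u j) = norm (s i - u i)" by (simp add: Suc u_Suc norm_minus_commute)
    also have "\<dots> < norm v / 2 ^ Suc i" using f[OF uV] False by (simp add: s_def)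
    finally show ?thesis by (simp add: Suc power_one_over)
  qed (simp add: u_0)
  have Phi_s_bound: "norm (\<Phi> (s j)) \<le> M * norm v * (1/2) ^ j" for j
    using f[OF uV[of j], of "norm v / 2 ^ Suc j"] False u_bound[of j] M
    by (simp add: s_def) (metis mult.assoc mult_left_mono order_trans)
  have geometric: "summable (\<lambda>j. M * norm v * (1/2::real) ^ j)"
    by (simp add: summable_geometric)
  have norms_summable: "summable (\<lambda>j. norm (\<Phi> (s j)))"
    using Phi_s_bound by (intro summable_comparison_test[OF _ geometric]) auto
  have partial_sums: "(\<Sum>j<n. s j) = v - u n" for n
    by (induction n) (simp_all add: u_0 u_Suc)
  have "u \<longlonglongrightarrow> 0"
    by (rule Lim_null_comparison[OF always_eventually[OF allI[OF u_bound]]])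
      (intro tendsto_mult_right_zero LIMSEQ_realpow_zero; simp)
  then have "(\<lambda>n. \<Sum>j<n. s j) \<longlonglongrightarrow> v"
    unfolding partial_sums using tendsto_diff[of "\<lambda>_. v" v sequentially] by fastforce
  moreover have "(\<lambda>n. \<Phi> (\<Sum>j<n. s j)) \<longlonglongrightarrow> (\<Sum>j. \<Phi> (s j))"
    unfolding sum[OF sV] by (rule summable_LIMSEQ[OF summable_norm_cancel[OF norms_summable]])
  ultimately have "\<Phi> v = (\<Sum>j. \<Phi> (s j))"
    using graph subspace_sum[OF subspace] sV by metis
  also have "norm \<dots> \<le> (\<Sum>j. norm (\<Phi> (s j)))" by (rule summable_norm[OF norms_summable])
  also have "\<dots> \<le> (\<Sum>j. M * norm v * (1/2) ^ j)"
    by (rule suminf_le[OF Phi_s_bound norms_summable geometric])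
  also have "\<dots> = 2 * M * norm v"
    by (simp add: suminf_mult suminf_geometric summable_geometric)
  finally show ?thesis .
qed

theorem closed_graph_theorem:
  assumes "\<And>v x w. (\<And>k. v k \<in> V) \<Longrightarrow> v \<longlonglongrightarrow> x \<Longrightarrow> (\<lambda>k. \<Phi> (v k)) \<longlonglongrightarrow> w \<Longrightarrow>
    \<Phi> x = w"
  shows "\<exists>M. \<forall>v\<in>V. norm (\<Phi> v) \<le> M * norm v"
proof -
  obtain M where M: "M \<ge> 0" and approx:
    "\<And>u (\<epsilon>::real). u \<in> V \<Longrightarrow> \<epsilon> > 0 \<Longrightarrow>
      \<exists>s\<in>V. norm (\<Phi> s) \<le> M * norm u \<and> norm (s - u) < \<epsilon>"
    using exists_bounded_approximants by blast
  have "norm (\<Phi> v) \<le> 2 * M * norm v" if "v \<in> V" for v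
    by (rule norm_le_if_bounded_approximants[OF M]) (fact approx assms that)+
  then show ?thesis by blast
qed

end

lemma linear_norm_le_if_bounded_on_ball:
  assumes f: "linear f" and r: "r > 0" and ball: "\<And>y. norm y < r \<Longrightarrow> norm (f y) \<le> K"
  shows "norm (f y) \<le> 2 * K / r * norm y"
proof (cases "y = 0")
  case True
  then show ?thesis by (simp add: linear_0[OF f])
next
  case False
  define l where "l = r / (2 * norm y)"
  have l: "l > 0" using False r by (simp add: l_def)
  have "l * norm (f y) = norm (f (l *\<^sub>R y))" using l by (simp add: linear_scale[OF f])
  also have "\<dots> \<le> K" using False r by (intro ball) (simp add: l_def)
  finally show ?thesis using False r by (simp add: l_def field_simps)
qed

theorem uniform_boundedness:
  fixes L :: "'i \<Rightarrow> 'a::banach \<Rightarrow>\<^sub>L 'b::real_normed_vector"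
  assumes pointwise: "\<And>x. bounded (range (\<lambda>i. L i x))"
  shows "bounded (range L)"
proof -
  define F where "F k = {x. \<forall>i. norm (L i x) \<le> real k}" for k :: nat
  have F_closed: "closed (F k)" for k
    unfolding F_def by (intro closed_Collect_all closed_Collect_le continuous_intros)
  have cover: "UNIV \<subseteq> (\<Union>k. F k)"
  proof
    fix x :: 'a
    obtain B where "\<forall>i. norm (L i x) \<le> B" using pointwise[of x] by (auto simp: bounded_iff)
    moreover obtain k :: nat where "B \<le> real k" using real_arch_simple by blast
    ultimately have "x \<in> F k" unfolding F_def by (auto intro: order_trans)
    then show "x \<in> (\<Union>k. F k)" by blast
  qed
  obtain k x r where r: "r > 0" "ball x r \<subseteq> F k"
  proof (rule Baire_closed_cover_ball[OF closed_UNIV _ F_closed _ cover])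
    fix k v r assume "r > 0" "v \<in> UNIV" "ball v r \<inter> UNIV \<subseteq> F k"
    then show thesis by (intro that[of r v k]) auto
  qed auto
  have "norm (L i y) \<le> 2 * real k" if "norm y < r" for i y
  proof -
    have "x + y \<in> F k" "x \<in> F k" using r that by (auto simp: dist_norm)
    then have "norm (L i (x + y)) \<le> real k" "norm (L i x) \<le> real k" by (auto simp: F_def)
    moreover have "norm (L i y) \<le> norm (L i (x + y)) + norm (L i x)"
      using norm_triangle_ineq4[of "L i (x + y)" "L i x"] by (simp add: blinfun.bilinear_simps)
    ultimately show ?thesis by linarith
  qed
  then have "norm (L i y) \<le> 2 * (2 * real k) / r * norm y" for i y
    by (rule linear_norm_le_if_bounded_on_ball[OF bounded_linear.linear[OF blinfun.bounded_linear_right] r(1)])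
  then have "norm (L i) \<le> 2 * (2 * real k) / r" for i
    using r(1) by (intro norm_blinfun_bound) auto
  then show ?thesis by (auto simp: bounded_iff)
qed

lemma restricts_bounded_if_range_invariant:
  fixes i :: "'d::banach \<Rightarrow> 'x::banach"
  assumes i: "bounded_linear i" "inj i" and T: "bounded_linear T"
    and invariant: "\<And>d. T (i d) \<in> range i"
  shows "restricts_bounded i T"
proof -
  define S where "S d = inv i (T (i d))" for d
  have iS: "i (S d) = T (i d)" for d
    using invariant[of d] by (auto simp: S_def f_inv_into_f)
  have S_add: "S (a + b) = S a + S b" and S_scale: "S (c *\<^sub>R a) = c *\<^sub>R S a" for a b c
    using iS i T by (auto intro!: injD[OF i(2)] simp: linear_simps)
  interpret closed_subspace_linear_map UNIV S
    by unfold_locales (simp_all add: S_add S_scale)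
  have graph: "S x = w" if v: "v \<longlonglongrightarrow> x" and w: "(\<lambda>k. S (v k)) \<longlonglongrightarrow> w" for v x w
  proof -
    have "(\<lambda>k. i (S (v k))) \<longlonglongrightarrow> T (i x)"
      unfolding iS by (intro bounded_linear.tendsto[OF T] bounded_linear.tendsto[OF i(1)] v)
    moreover have "(\<lambda>k. i (S (v k))) \<longlonglongrightarrow> i w" by (rule bounded_linear.tendsto[OF i(1) w])
    ultimately show "S x = w" using LIMSEQ_unique injD[OF i(2)] iS by metis
  qed
  obtain M where "\<forall>d\<in>UNIV. norm (S d) \<le> M * norm d"
    using closed_graph_theorem graph by blast
  then have "bounded_linear S"
    by (intro bounded_linear_intro[of _ M]) (auto simp: S_add S_scale mult.commute)
  then show ?thesis using iS by (auto simp: restricts_bounded_def)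
qed

text \<open>Junk unless \<open>restricts_bounded i T\<close> holds and \<open>i\<close> is injective.\<close>
definition induced_blinfun ::
    "('e::real_normed_vector \<Rightarrow> 'x::real_normed_vector) \<Rightarrow> ('x \<Rightarrow> 'x) \<Rightarrow> 'e \<Rightarrow>\<^sub>L 'e" where
  "induced_blinfun i T = (THE R. \<forall>e. i (blinfun_apply R e) = T (i e))"

lemma induced_blinfun_eq:
  fixes R :: "'e::real_normed_vector \<Rightarrow>\<^sub>L 'e"
  assumes "inj i" and "\<And>e. i (R e) = T (i e)"
  shows "induced_blinfun i T = R"
  unfolding induced_blinfun_def
proof (rule the_equality)
  fix R' assume "\<forall>e. i (blinfun_apply R' e) = T (i e)"
  then show "R' = R" using assms by (intro blinfun_eqI) (metis injD)
qed (use assms in blast)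

lemma induced_blinfun_apply:
  assumes "inj i" and "restricts_bounded i T"
  shows "i (induced_blinfun i T e) = T (i e)"
proof -
  obtain S where "bounded_linear S" "\<And>e. i (S e) = T (i e)"
    using assms(2) unfolding restricts_bounded_def by blast
  then show ?thesis
    using induced_blinfun_eq[OF assms(1), of "Blinfun S"] by (simp add: bounded_linear_Blinfun_apply)
qed

lemma interpolation_space_induced_norm_le:
  fixes iD :: "'d::banach \<Rightarrow> 'x::banach" and iE :: "'e::banach \<Rightarrow> 'x"
  assumes "interpolation_space iD iE"
  shows "\<exists>C\<ge>0. \<forall>(T :: 'x \<Rightarrow>\<^sub>L 'x) (S :: 'd \<Rightarrow>\<^sub>L 'd).
           (\<forall>d. iD (blinfun_apply S d) = blinfun_apply T (iD d)) \<longrightarrow>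
           norm (induced_blinfun iE (blinfun_apply T)) \<le> C * (norm T + norm S)"
proof -
  have iD: "bounded_linear iD" and iE: "bounded_linear iE" "inj iE"
    and interp: "\<And>T. bounded_linear T \<Longrightarrow> restricts_bounded iD T \<Longrightarrow> restricts_bounded iE T"
    using assms unfolding interpolation_space_def cont_embedding_def by auto
  define V where "V = {p :: ('x \<Rightarrow>\<^sub>L 'x) \<times> ('d \<Rightarrow>\<^sub>L 'd).
    \<forall>d. iD (blinfun_apply (snd p) d) = blinfun_apply (fst p) (iD d)}"
  define \<Phi> where "\<Phi> p = induced_blinfun iE (blinfun_apply (fst p))"
    for p :: "('x \<Rightarrow>\<^sub>L 'x) \<times> ('d \<Rightarrow>\<^sub>L 'd)"
  have \<Phi>_apply: "iE (blinfun_apply (\<Phi> p) e) = blinfun_apply (fst p) (iE e)" if "p \<in> V" for p e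
  proof -
    have "restricts_bounded iD (fst p)"
      using that unfolding V_def restricts_bounded_def by (blast intro: blinfun.bounded_linear_right)
    then show ?thesis
      unfolding \<Phi>_def by (intro induced_blinfun_apply iE interp blinfun.bounded_linear_right)
  qed
  have \<Phi>_eq: "\<Phi> p = R" if "\<And>e. iE (blinfun_apply R e) = blinfun_apply (fst p) (iE e)"
    for p and R :: "'e \<Rightarrow>\<^sub>L 'e"
    unfolding \<Phi>_def using induced_blinfun_eq[OF iE(2)] that .
  have "subspace V"
    unfolding subspace_def V_def
    by (auto simp: blinfun.bilinear_simps linear_simps[OF iD])
  moreover have "closed V"
    unfolding V_def
    by (intro closed_Collect_all closed_Collect_eq continuous_intros bounded_linear.continuous_on[OF iD])
  ultimately interpret closed_subspace_linear_map V \<Phi>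
    by unfold_locales
      (auto intro!: \<Phi>_eq simp: \<Phi>_apply blinfun.bilinear_simps linear_simps[OF iE(1)]
        subspace_add subspace_scale)
  have "\<Phi> x = w" if "\<And>k. v k \<in> V" "v \<longlonglongrightarrow> x" "(\<lambda>k. \<Phi> (v k)) \<longlonglongrightarrow> w" for v x w
  proof (rule \<Phi>_eq)
    fix e
    have "(\<lambda>k. iE (blinfun_apply (\<Phi> (v k)) e)) \<longlonglongrightarrow> iE (blinfun_apply w e)"
      by (intro bounded_linear.tendsto[OF iE(1)] tendsto_intros that)
    moreover have "(\<lambda>k. iE (blinfun_apply (\<Phi> (v k)) e)) \<longlonglongrightarrow> blinfun_apply (fst x) (iE e)"
      unfolding \<Phi>_apply[OF that(1)] by (intro tendsto_intros that)
    ultimately show "iE (blinfun_apply w e) = blinfun_apply (fst x) (iE e)" by (rule LIMSEQ_unique)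
  qed
  then obtain M where M: "\<And>p. p \<in> V \<Longrightarrow> norm (\<Phi> p) \<le> M * norm p"
    using closed_graph_theorem by blast
  show ?thesis
  proof (intro exI[of _ "max M 0"] conjI allI impI)
    show "max M 0 \<ge> 0" by simp
    fix T S assume "\<forall>d. iD (blinfun_apply S d) = blinfun_apply T (iD d)"
    then have "(T, S) \<in> V" by (simp add: V_def)
    then have "norm (induced_blinfun iE (blinfun_apply T)) \<le> M * norm (T, S)"
      using M[of "(T, S)"] by (simp add: \<Phi>_def)
    also have "\<dots> \<le> max M 0 * (norm T + norm S)"
      by (intro mult_mono norm_Pair_le) auto
    finally show "norm (induced_blinfun iE (blinfun_apply T)) \<le> max M 0 * (norm T + norm S)" .
  qed
qed

lemma interpolation_space_induced_bounded:
  fixes iD :: "'d::banach \<Rightarrow> 'x::banach" and iE :: "'e::banach \<Rightarrow> 'x"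
  assumes interp: "interpolation_space iD iE"
    and T: "\<And>n. bounded_linear (T n)" "\<And>n. restricts_bounded iD (T n)"
    and bounded_X: "bounded (range (\<lambda>n. Blinfun (T n)))"
    and bounded_D: "bounded (range (\<lambda>n. induced_blinfun iD (T n)))"
  shows "bounded (range (\<lambda>n. induced_blinfun iE (T n)))"
proof -
  obtain C where C: "C \<ge> 0" and interpolation_bound:
    "\<forall>T S. (\<forall>d. iD (blinfun_apply S d) = blinfun_apply T (iD d)) \<longrightarrow>
       norm (induced_blinfun iE (blinfun_apply T)) \<le> C * (norm T + norm S)"
    using interpolation_space_induced_norm_le[OF interp] by blast
  obtain CX CD where CX: "\<And>n. norm (Blinfun (T n)) \<le> CX"
    and CD: "\<And>n. norm (induced_blinfun iD (T n)) \<le> CD"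
    using bounded_X bounded_D by (auto simp: bounded_iff)
  have "inj iD" using interp by (simp add: interpolation_space_def cont_embedding_def)
  have "norm (induced_blinfun iE (T n)) \<le> C * (CX + CD)" for n
  proof -
    have "norm (induced_blinfun iE (T n)) \<le> C * (norm (Blinfun (T n)) + norm (induced_blinfun iD (T n)))"
      using interpolation_bound[rule_format, of "induced_blinfun iD (T n)" "Blinfun (T n)"]
      by (simp add: bounded_linear_Blinfun_apply[OF T(1)] induced_blinfun_apply[OF \<open>inj iD\<close> T(2)])
    also have "\<dots> \<le> C * (CX + CD)" by (intro mult_left_mono add_mono CX CD C)
    finally show ?thesis .
  qed
  then show ?thesis by (auto simp: bounded_iff)
qed

lemma induced_blinfun_tendsto_zero:
  fixes i :: "'d::banach \<Rightarrow> 'x::banach" and T :: "nat \<Rightarrow> 'x \<Rightarrow> 'x"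
  assumes i: "bounded_linear i" "inj i" and T: "\<And>n. bounded_linear (T n)"
    and T_D: "\<And>d. \<exists>s :: nat \<Rightarrow> 'd. (\<forall>n. i (s n) = T n (i d)) \<and> (\<lambda>n. norm (s n)) \<longlonglongrightarrow> 0"
  shows "restricts_bounded i (T n)" and "(\<lambda>n. induced_blinfun i (T n) d) \<longlonglongrightarrow> 0"
proof -
  show restricts: "restricts_bounded i (T n)" for n
    using T_D by (intro restricts_bounded_if_range_invariant[OF i T]) (metis rangeI)
  obtain s where s: "\<And>n. i (s n) = T n (i d)" "(\<lambda>n. norm (s n)) \<longlonglongrightarrow> 0"
    using T_D[of d] by blast
  have "induced_blinfun i (T n) d = s n" for n
    using induced_blinfun_apply[OF i(2) restricts] s(1) by (metis injD[OF i(2)])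
  then show "(\<lambda>n. induced_blinfun i (T n) d) \<longlonglongrightarrow> 0"
    using s(2) by (simp add: tendsto_norm_zero_iff)
qed

lemma blinfun_tendsto_zero_if_dense:
  fixes B :: "'i \<Rightarrow> 'a::real_normed_vector \<Rightarrow>\<^sub>L 'b::real_normed_vector"
  assumes "bounded (range B)" and dense: "closure A = UNIV"
    and zero: "\<And>a. a \<in> A \<Longrightarrow> ((\<lambda>n. B n a) \<longlongrightarrow> 0) F"
  shows "((\<lambda>n. B n x) \<longlongrightarrow> 0) F"
proof (rule tendstoI)
  obtain K where bound: "\<And>n. norm (B n) \<le> K" using assms(1) by (auto simp: bounded_iff)
  fix \<epsilon> :: real assume \<epsilon>: "\<epsilon> > 0"
  define \<delta> where "\<delta> = \<epsilon> / (2 * (\<bar>K\<bar> + 1))"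
  have "\<delta> > 0" using \<epsilon> by (simp add: \<delta>_def)
  moreover have "x \<in> closure A" using dense by simp
  ultimately obtain a where a: "a \<in> A" "norm (x - a) < \<delta>"
    unfolding closure_approachable dist_norm by (metis norm_minus_commute)
  have "\<forall>\<^sub>F n in F. norm (B n a) < \<epsilon> / 2"
    using tendstoD[OF zero[OF a(1)], of "\<epsilon> / 2"] \<epsilon> by simp
  then show "\<forall>\<^sub>F n in F. dist (B n x) 0 < \<epsilon>"
  proof eventually_elim
    fix n assume small: "norm (B n a) < \<epsilon> / 2"
    have "norm (B n x) \<le> norm (B n (x - a)) + norm (B n a)"
      using norm_triangle_ineq[of "B n (x - a)" "B n a"] by (simp add: blinfun.bilinear_simps)
    also have "norm (B n (x - a)) \<le> \<bar>K\<bar> * \<delta>"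
      using norm_blinfun[of "B n" "x - a"] bound[of n] a(2)
      by (smt (verit, best) mult_mono norm_ge_zero)
    also have "\<bar>K\<bar> * \<delta> \<le> \<epsilon> / 2"
      using \<epsilon> by (simp add: \<delta>_def field_simps)
    finally show "dist (B n x) 0 < \<epsilon>" using small by simp
  qed
qed

theorem lemma1:
  fixes iD :: "'d::banach \<Rightarrow> 'x::banach" and iE :: "'e::banach \<Rightarrow> 'x"
    and jDE :: "'d \<Rightarrow> 'e" and T :: "nat \<Rightarrow> 'x \<Rightarrow> 'x"
  assumes interp: "interpolation_space iD iE"
    and jDE: "bounded_linear jDE" "\<And>d. iE (jDE d) = iD d"
    and dense: "closure (range jDE) = UNIV"
    and T_bl: "\<And>n. bounded_linear (T n)"
    and T_X: "\<And>x. (\<lambda>n. norm (T n x)) \<longlonglongrightarrow> 0"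
    and T_D: "\<And>d. \<exists>s :: nat \<Rightarrow> 'd. (\<forall>n. iD (s n) = T n (iD d)) \<and> (\<lambda>n. norm (s n)) \<longlonglongrightarrow> 0"
  shows "\<And>e. \<exists>r :: nat \<Rightarrow> 'e. (\<forall>n. iE (r n) = T n (iE e)) \<and> (\<lambda>n. norm (r n)) \<longlonglongrightarrow> 0"
proof -
  have iD: "bounded_linear iD" "inj iD" and iE: "inj iE"
    and restricts: "\<And>T. bounded_linear T \<Longrightarrow> restricts_bounded iD T \<Longrightarrow> restricts_bounded iE T"
    using interp unfolding interpolation_space_def cont_embedding_def by auto
  define A where "A n = induced_blinfun iD (T n)" for n
  define B where "B n = induced_blinfun iE (T n)" for n
  have restricts_D: "restricts_bounded iD (T n)" for n
    by (rule induced_blinfun_tendsto_zero(1)[OF iD T_bl T_D])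
  have A_zero: "(\<lambda>n. A n d) \<longlonglongrightarrow> 0" for d
    unfolding A_def by (rule induced_blinfun_tendsto_zero(2)[OF iD T_bl T_D])
  have "bounded (range (\<lambda>n. Blinfun (T n)))"
    using convergent_imp_bounded[OF T_X[unfolded tendsto_norm_zero_iff]]
    by (intro uniform_boundedness) (simp add: bounded_linear_Blinfun_apply[OF T_bl])
  moreover have "bounded (range A)"
    using convergent_imp_bounded[OF A_zero] by (rule uniform_boundedness)
  ultimately have B_bounded: "bounded (range B)"
    unfolding A_def B_def by (rule interpolation_space_induced_bounded[OF interp T_bl restricts_D])
  have B: "iE (B n e) = T n (iE e)" for n e
    unfolding B_def by (simp add: induced_blinfun_apply iE restricts restricts_D T_bl)
  have "iE (B n (jDE d)) = iE (jDE (A n d))" for n d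
    unfolding A_def by (simp add: B jDE(2) induced_blinfun_apply iD restricts_D)
  then have "B n (jDE d) = jDE (A n d)" for n d
    by (rule injD[OF iE])
  moreover have "(\<lambda>n. jDE (A n d)) \<longlonglongrightarrow> 0" for d
    using bounded_linear.tendsto[OF jDE(1) A_zero[of d]]
    by (simp add: linear_0[OF bounded_linear.linear[OF jDE(1)]])
  ultimately have "(\<lambda>n. B n a) \<longlonglongrightarrow> 0" if "a \<in> range jDE" for a
    using that by auto
  then have "(\<lambda>n. B n e) \<longlonglongrightarrow> 0" for e
    by (rule blinfun_tendsto_zero_if_dense[OF B_bounded dense])
  then show "\<exists>r. (\<forall>n. iE (r n) = T n (iE e)) \<and> (\<lambda>n. norm (r n)) \<longlonglongrightarrow> 0" for e
    using B by (intro exI[of _ "\<lambda>n. B n e"]) (simp add: tendsto_norm_zero_iff)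
qed

end
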